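(* Let $(p_D)_{D\in\mathcal{I}}$ be a probability distribution on $\mathcal{I}$, let $q>1$, and for $\mathbf{Q}\in B(\mathcal{L})$ define $$p^T(\mathbf{Q})=\sum_{S\in\mathcal{P}_{\mathbf{Q}}}\frac{p_S}{q-1}\left(1-p_S^{\,q-1}\right),\qquad p_S=\sum_{D\in S}p_D.$$ Then $p^T$ is an arbitrage-free instance-independent pricing function.
   Context: $\mathcal{I}$ is a countable nonempty set of database instances; queries are deterministic functions on $\mathcal{I}$; a query bundle is a finite tuple of queries from a language $\mathcal{L}$, evaluated componentwise; $B(\mathcal{L})$ is the set of bundles, closed under concatenation $\mathbf{Q}_1,\mathbf{Q}_2$. $\mathcal{P}_{\mathbf{Q}}$ is the partition of $\mathcal{I}$ into the equivalence classes of $D\sim D'\iff\mathbf{Q}(D)=\mathbf{Q}(D')$. An instance-independent pricing function $p$ is arbitrage-free if (i) whenever for all $D',D''\in\mathcal{I}$, $\mathbf{Q}_2(D')=\mathbf{Q}_2(D'')$ implies $\mathbf{Q}_1(D')=\mathbf{Q}_1(D'')$, we have $p(\mathbf{Q}_2)\ge p(\mathbf{Q}_1)$; and (ii) $p(\mathbf{Q}_1,\mathbf{Q}_2)\le p(\mathbf{Q}_1)+p(\mathbf{Q}_2)$ for all bundles. *)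

theory Defs
  imports "HOL-Analysis.Analysis"
begin

definition eval_bundle :: "('i \<Rightarrow> 'o) list \<Rightarrow> 'i \<Rightarrow> 'o list" where
  "eval_bundle Q D = map (\<lambda>f. f D) Q"

definition bundles :: "('i \<Rightarrow> 'o) set \<Rightarrow> ('i \<Rightarrow> 'o) list set" where
  "bundles L = {Q. set Q \<subseteq> L}"

definition partition_of :: "('i \<Rightarrow> 'o) list \<Rightarrow> 'i set set" where
  "partition_of Q = UNIV // {(D, D'). eval_bundle Q D = eval_bundle Q D'}"

definition arbitrage_free :: "('i \<Rightarrow> 'o) set \<Rightarrow> (('i \<Rightarrow> 'o) list \<Rightarrow> real) \<Rightarrow> bool" where
  "arbitrage_free L p \<longleftrightarrow>
     (\<forall>Q1\<in>bundles L. \<forall>Q2\<in>bundles L.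
        (\<forall>D' D''. eval_bundle Q2 D' = eval_bundle Q2 D'' \<longrightarrow> eval_bundle Q1 D' = eval_bundle Q1 D'')
          \<longrightarrow> p Q2 \<ge> p Q1) \<and>
     (\<forall>Q1\<in>bundles L. \<forall>Q2\<in>bundles L. p (Q1 @ Q2) \<le> p Q1 + p Q2)"

definition tsallis_price :: "('i \<Rightarrow> real) \<Rightarrow> real \<Rightarrow> ('i \<Rightarrow> 'o) list \<Rightarrow> real" where
  "tsallis_price pd q Q =
     (\<Sum>\<^sub>\<infinity>S\<in>partition_of Q. infsum pd S / (q - 1) * (1 - infsum pd S powr (q - 1)))"

end

theory Submission
  imports Defs
begin

(*
  The price of a bundle Q is the Tsallis entropy of the map D \<mapsto> Q(D): writing p[D] for the
  mass of the class of D and w(x) = (1 - x^(q-1))/(q-1), it is the expectation of w(p[D]).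

  Monotonicity: if Q2 determines Q1, every class of Q2 lies inside a class of Q1, so p[D]
  only decreases, and w is antitone.

  Subadditivity: let a, b, r be the masses of the class of D under Q1, Q2 and (Q1, Q2), so
  r \<le> a, b. Together with a tangent line of the convex map x \<mapsto> x^q at b, this gives the
  pointwise bound w(a) + w(b) - w(r) \<ge> b^(q-1) - a b^q / r. Summing class by class, the
  expectation of a b^q / r is the sum of p_x p_y^q over the nonempty classes (x, y) of the
  joint bundle, which is at most (\<Sum>_x p_x)(\<Sum>_y p_y^q), the expectation of b^(q-1).
*)

lemma has_sum_diff:
  fixes f g :: "'a \<Rightarrow> 'b::topological_ab_group_add"
  assumes "(f has_sum a) A" "(g has_sum b) A"
  shows "((\<lambda>x. f x - g x) has_sum a - b) A"
  using has_sum_add[OF assms(1), of "\<lambda>x. - g x" "- b"] assms(2) by (simp add: has_sum_uminus)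

lemma powr_above_tangent:
  fixes p m t :: real
  assumes "p \<ge> 1" "m > 0" "t > 0"
  shows "p * m powr (p - 1) * (t - m) \<le> t powr p - m powr p"
  using assms
  by (intro convex_on_imp_above_tangent[where A = "{0<..}", OF powr_convex])
     (auto intro!: derivative_eq_intros simp: interior_open)

definition tsallis_weight :: "real \<Rightarrow> real \<Rightarrow> real" where
  "tsallis_weight q x = (1 - x powr (q - 1)) / (q - 1)"

lemma tsallis_weight_nonneg: "q > 1 \<Longrightarrow> 0 \<le> x \<Longrightarrow> x \<le> 1 \<Longrightarrow> tsallis_weight q x \<ge> 0"
  unfolding tsallis_weight_def using powr_le1[of "q - 1" x] by simp

lemma tsallis_weight_le: "q > 1 \<Longrightarrow> tsallis_weight q x \<le> 1 / (q - 1)"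
  unfolding tsallis_weight_def by (simp add: divide_right_mono)

lemma tsallis_weight_antimono:
  "q > 1 \<Longrightarrow> 0 \<le> x \<Longrightarrow> x \<le> y \<Longrightarrow> tsallis_weight q y \<le> tsallis_weight q x"
  unfolding tsallis_weight_def using powr_mono2[of "q - 1" x y] by (simp add: divide_right_mono)

lemma tsallis_weight_cross_bound:
  fixes a b r q :: real
  assumes "0 < r" "r \<le> a" "a \<le> 1" "r \<le> b" "q > 1"
  shows "b powr (q - 1) - a * b powr q / r
    \<le> tsallis_weight q a + tsallis_weight q b - tsallis_weight q r"
proof -
  define s where "s = q - 1"
  define x where "x = r / a"
  define c where "c = a * b powr q / r"
  have s: "s > 0" and a: "a > 0" and b: "b > 0" and x: "0 < x" "x \<le> 1"
    using assms by (auto simp: s_def x_def)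
  have "0 \<le> (1 - a powr s) * (1 - x powr s)"
    using assms s x by (intro mult_nonneg_nonneg) (auto intro: powr_le1)
  moreover have "a powr s * x powr s = r powr s"
    using a assms(1) by (simp add: x_def powr_divide)
  ultimately have x_powr_le: "x powr s \<le> 1 - a powr s + r powr s"
    by (simp add: algebra_simps)
  have x_powr_q: "x powr q = x * x powr s" and b_powr_q: "b powr q = b * b powr s"
    using x b by (simp_all add: s_def powr_mult_base)
  have c: "b powr q = x * c"
    using a assms(1) by (simp add: x_def c_def)
  have "x * (q * b powr s - q * c) = q * b powr s * (x - b)"
    using b_powr_q c by (simp add: algebra_simps)
  also have "\<dots> \<le> x powr q - b powr q"
    using powr_above_tangent[of q b x] assms b x by (simp add: s_def)
  also have "\<dots> = x * (x powr s - c)"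
    using x_powr_q c by (simp add: right_diff_distrib)
  finally have "q * b powr s - q * c \<le> x powr s - c"
    using x by simp
  then have "s * (b powr s - c) \<le> 1 - a powr s - b powr s + r powr s"
    using x_powr_le by (simp add: s_def algebra_simps)
  then have "b powr s - c \<le> (1 - a powr s - b powr s + r powr s) / s"
    using s by (simp add: pos_le_divide_eq mult.commute)
  also have "\<dots> = tsallis_weight q a + tsallis_weight q b - tsallis_weight q r"
    by (simp add: tsallis_weight_def s_def add_divide_distrib diff_divide_distrib)
  finally show ?thesis
    by (simp add: s_def c_def)
qed

definition fibre_mass :: "('i \<Rightarrow> real) \<Rightarrow> ('i \<Rightarrow> 'b) \<Rightarrow> 'b \<Rightarrow> real" where
  "fibre_mass pd k v = infsum pd (k -` {v})"

lemma has_sum_fibrewise: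
  fixes pd :: "'i \<Rightarrow> real" and k :: "'i \<Rightarrow> 'b" and h :: "'b \<Rightarrow> real"
  assumes pd_nonneg: "\<And>D. pd D \<ge> 0" and pd_summable: "pd summable_on UNIV"
    and h_nonneg: "\<And>v. v \<in> range k \<Longrightarrow> h v \<ge> 0"
  shows "((\<lambda>D. pd D * h (k D)) has_sum S) UNIV \<longleftrightarrow>
    ((\<lambda>v. fibre_mass pd k v * h v) has_sum S) (range k)"
proof -
  define F where "F = (\<lambda>(v, D). pd D * h v)"
  have fibre: "((\<lambda>D. F (v, D)) has_sum fibre_mass pd k v * h v) (k -` {v})" for v
  proof -
    have "(pd has_sum fibre_mass pd k v) (k -` {v})"
      unfolding fibre_mass_def
      by (rule has_sum_infsum, rule summable_on_subset_banach[OF pd_summable]) simp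
    then show ?thesis
      by (simp add: F_def has_sum_cmult_left)
  qed
  have "inj_on snd (Sigma (range k) (\<lambda>v. k -` {v}))" and "snd ` Sigma (range k) (\<lambda>v. k -` {v}) = UNIV"
    by (auto simp: inj_on_def) force
  then have "((\<lambda>D. pd D * h (k D)) has_sum S) UNIV \<longleftrightarrow> (F has_sum S) (Sigma (range k) (\<lambda>v. k -` {v}))"
    using has_sum_reindex[of snd "Sigma (range k) (\<lambda>v. k -` {v})" "\<lambda>D. pd D * h (k D)" S]
    by (simp add: o_def) (intro has_sum_cong, auto simp: F_def)
  also have "\<dots> \<longleftrightarrow> ((\<lambda>v. fibre_mass pd k v * h v) has_sum S) (range k)"
  proof
    assume "(F has_sum S) (Sigma (range k) (\<lambda>v. k -` {v}))"
    then show "((\<lambda>v. fibre_mass pd k v * h v) has_sum S) (range k)"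
      by (rule has_sum_SigmaD) (rule fibre)
  next
    assume sum: "((\<lambda>v. fibre_mass pd k v * h v) has_sum S) (range k)"
    have "F summable_on Sigma (range k) (\<lambda>v. k -` {v})"
      using sum pd_nonneg h_nonneg
      by (intro summable_on_SigmaI[OF fibre]) (auto simp: F_def summable_on_def)
    then show "(F has_sum S) (Sigma (range k) (\<lambda>v. k -` {v}))"
      by (rule has_sum_SigmaI[OF fibre sum])
  qed
  finally show ?thesis .
qed

lemma partition_of_eq_fibres:
  "partition_of Q = (\<lambda>v. eval_bundle Q -` {v}) ` range (eval_bundle Q)"
proof -
  have "{D'. eval_bundle Q D = eval_bundle Q D'} = eval_bundle Q -` {eval_bundle Q D}" for D
    by auto
  then show ?thesis
    unfolding partition_of_def quotient_def by auto
qed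

lemma eval_bundle_append_eq_iff:
  "eval_bundle (Q1 @ Q2) D = eval_bundle (Q1 @ Q2) D' \<longleftrightarrow>
    (eval_bundle Q1 D, eval_bundle Q2 D) = (eval_bundle Q1 D', eval_bundle Q2 D')"
  unfolding eval_bundle_def by (simp add: append_eq_append_conv)

locale prob_weights =
  fixes pd :: "'i \<Rightarrow> real"
  assumes nonneg: "\<And>D. pd D \<ge> 0" and has_sum_1: "(pd has_sum 1) UNIV"
begin

lemma summable_on: "pd summable_on A"
  using summable_on_subset_banach[of pd UNIV A] has_sum_1 by (auto simp: summable_on_def)

lemma infsum_mono_set: "A \<subseteq> B \<Longrightarrow> infsum pd A \<le> infsum pd B"
  by (rule infsum_mono_neutral[OF summable_on summable_on]) (use nonneg in auto)

lemma fibre_mass_nonneg: "fibre_mass pd k v \<ge> 0"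
  unfolding fibre_mass_def by (rule infsum_nonneg) (use nonneg in auto)

lemma fibre_mass_le_1: "fibre_mass pd k v \<le> 1"
  using infsum_mono_set[of "k -` {v}" UNIV] has_sum_1 by (simp add: fibre_mass_def infsumI)

lemma le_fibre_mass: "pd D \<le> fibre_mass pd k (k D)"
  using infsum_mono_set[of "{D}" "k -` {k D}"] by (simp add: fibre_mass_def)

lemma fibre_mass_mono:
  "k' -` {k' D} \<subseteq> k -` {k D} \<Longrightarrow> fibre_mass pd k' (k' D) \<le> fibre_mass pd k (k D)"
  unfolding fibre_mass_def by (rule infsum_mono_set)

lemma summable_on_bounded:
  assumes "\<And>D. 0 \<le> h D" "\<And>D. h D \<le> C"
  shows "(\<lambda>D. pd D * h D) summable_on UNIV"
proof -
  have "(\<lambda>D. pd D * C) summable_on UNIV"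
    using has_sum_cmult_left[OF has_sum_1, of C] by (auto simp: summable_on_def)
  then show ?thesis
    by (rule summable_on_comparison_test) (use assms nonneg in \<open>auto intro: mult_left_mono\<close>)
qed

lemma summable_on_fibre_mass_powr:
  "(\<lambda>D. pd D * fibre_mass pd k (k D) powr s) summable_on UNIV" if "s \<ge> 0"
  using that
  by (intro summable_on_bounded[of _ 1] powr_le1) (simp_all add: fibre_mass_nonneg fibre_mass_le_1)

lemma has_sum_fibre_mass: "((\<lambda>v. fibre_mass pd k v) has_sum 1) (range k)"
  using has_sum_fibrewise[OF nonneg summable_on, where k = k and h = "\<lambda>_. 1"] has_sum_1 by simp

lemma has_sum_fibre_mass_powr:
  assumes "q \<ge> 1"
  shows "((\<lambda>v. fibre_mass pd k v powr q)
    has_sum (\<Sum>\<^sub>\<infinity>D. pd D * fibre_mass pd k (k D) powr (q - 1))) (range k)"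
proof -
  have "((\<lambda>D. pd D * fibre_mass pd k (k D) powr (q - 1))
      has_sum (\<Sum>\<^sub>\<infinity>D. pd D * fibre_mass pd k (k D) powr (q - 1))) UNIV"
    using summable_on_fibre_mass_powr[of "q - 1" k] assms by auto
  then show ?thesis
    using has_sum_fibrewise[OF nonneg summable_on, where k = k and h = "\<lambda>v. fibre_mass pd k v powr (q - 1)"]
    by (simp add: powr_mult_base fibre_mass_nonneg)
qed

lemma has_sum_fibre_mass_product:
  fixes k1 :: "'i \<Rightarrow> 'a" and k2 :: "'i \<Rightarrow> 'b"
  assumes "q \<ge> 1"
  shows "((\<lambda>(x, y). fibre_mass pd k1 x * fibre_mass pd k2 y powr q)
    has_sum (\<Sum>\<^sub>\<infinity>D. pd D * fibre_mass pd k2 (k2 D) powr (q - 1))) (range k1 \<times> range k2)"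
    (is "(?P has_sum ?E) _")
proof -
  have rows: "((\<lambda>y. ?P (x, y)) has_sum fibre_mass pd k1 x * ?E) (range k2)" for x
    using has_sum_cmult_right[OF has_sum_fibre_mass_powr[OF assms]] by simp
  have cols: "((\<lambda>x. fibre_mass pd k1 x * ?E) has_sum ?E) (range k1)"
    using has_sum_cmult_left[OF has_sum_fibre_mass[of k1], where c = ?E] by simp
  have "?P summable_on range k1 \<times> range k2"
    using cols by (intro summable_on_SigmaI[OF rows]) (auto simp: summable_on_def fibre_mass_nonneg)
  then show ?thesis
    by (rule has_sum_SigmaI[OF rows cols])
qed

lemma cross_moment_le:
  fixes k1 :: "'i \<Rightarrow> 'a" and k2 :: "'i \<Rightarrow> 'b" and q :: real
  assumes "q \<ge> 1"
  shows "(\<lambda>D. pd D * (fibre_mass pd k1 (k1 D) * fibre_mass pd k2 (k2 D) powr q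
      / fibre_mass pd (\<lambda>D. (k1 D, k2 D)) (k1 D, k2 D))) summable_on UNIV" (is "?f summable_on _")
    and "(\<Sum>\<^sub>\<infinity>D. pd D * (fibre_mass pd k1 (k1 D) * fibre_mass pd k2 (k2 D) powr q
      / fibre_mass pd (\<lambda>D. (k1 D, k2 D)) (k1 D, k2 D)))
      \<le> (\<Sum>\<^sub>\<infinity>D. pd D * fibre_mass pd k2 (k2 D) powr (q - 1))"
proof -
  define K where "K = (\<lambda>D. (k1 D, k2 D))"
  define P where "P = (\<lambda>(x, y). fibre_mass pd k1 x * fibre_mass pd k2 y powr q)"
  define E where "E = (\<Sum>\<^sub>\<infinity>D. pd D * fibre_mass pd k2 (k2 D) powr (q - 1))"
  have P_sum: "(P has_sum E) (range k1 \<times> range k2)"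
    unfolding P_def E_def using assms by (rule has_sum_fibre_mass_product)
  have P_nonneg: "P w \<ge> 0" for w
    by (auto simp: P_def fibre_mass_nonneg case_prod_beta)
  \<comment> \<open>On a fibre of mass zero the quotient is junk, so only \<open>f \<le> P\<close> holds.\<close>
  define f where "f = (\<lambda>w. fibre_mass pd K w * (P w / fibre_mass pd K w))"
  have f_le: "0 \<le> f w" "f w \<le> P w" for w
    using P_nonneg[of w] by (auto simp: f_def fibre_mass_nonneg)
  have range_K: "range K \<subseteq> range k1 \<times> range k2"
    by (auto simp: K_def)
  have P_summable: "P summable_on range k1 \<times> range k2"
    using P_sum by (rule has_sum_imp_summable)
  have f_summable: "f summable_on range K"
    using f_le
    by (intro summable_on_comparison_test[OF summable_on_subset_banach[OF P_summable range_K]]) auto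
  have "infsum f (range K) \<le> infsum P (range k1 \<times> range k2)"
    using f_le range_K P_nonneg by (intro infsum_mono_neutral[OF f_summable P_summable]) auto
  also have "\<dots> = E"
    using P_sum by (simp add: infsumI)
  finally have f_le_E: "infsum f (range K) \<le> E" .
  have "(f has_sum infsum f (range K)) (range K)"
    using f_summable by (rule has_sum_infsum)
  then have "((\<lambda>D. pd D * (P (K D) / fibre_mass pd K (K D))) has_sum infsum f (range K)) UNIV"
    using has_sum_fibrewise[OF nonneg summable_on, where k = K and h = "\<lambda>w. P w / fibre_mass pd K w"]
    by (simp add: f_def P_nonneg fibre_mass_nonneg)
  then have "(?f has_sum infsum f (range K)) UNIV"
    by (simp add: P_def K_def)
  then show "?f summable_on UNIV" and "infsum ?f UNIV \<le> E"
    using f_le_E by (auto simp: summable_on_def infsumI)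
qed

end

locale tsallis = prob_weights pd for pd :: "'i \<Rightarrow> real" +
  fixes q :: real
  assumes q_gt_1: "q > 1"
begin

definition entropy :: "('i \<Rightarrow> 'b) \<Rightarrow> real" where
  "entropy k = (\<Sum>\<^sub>\<infinity>D. pd D * tsallis_weight q (fibre_mass pd k (k D)))"

lemma has_sum_entropy:
  "((\<lambda>D. pd D * tsallis_weight q (fibre_mass pd k (k D))) has_sum entropy k) UNIV"
proof -
  have "(\<lambda>D. pd D * tsallis_weight q (fibre_mass pd k (k D))) summable_on UNIV"
    using q_gt_1 fibre_mass_nonneg fibre_mass_le_1
    by (intro summable_on_bounded[of _ "1 / (q - 1)"] tsallis_weight_nonneg tsallis_weight_le)
  then show ?thesis
    unfolding entropy_def by (rule has_sum_infsum)
qed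

lemma tsallis_price_eq_entropy: "tsallis_price pd q Q = entropy (eval_bundle Q)"
proof -
  define k where "k = eval_bundle Q"
  have "inj_on (\<lambda>v. k -` {v}) (range k)"
    by (auto simp: inj_on_def)
  then have "tsallis_price pd q Q
      = (\<Sum>\<^sub>\<infinity>v\<in>range k. fibre_mass pd k v * tsallis_weight q (fibre_mass pd k v))"
    unfolding tsallis_price_def partition_of_eq_fibres k_def[symmetric]
    by (simp add: infsum_reindex o_def fibre_mass_def tsallis_weight_def)
  also have "\<dots> = entropy k"
    using has_sum_fibrewise[OF nonneg summable_on, where k = k and h = "\<lambda>v. tsallis_weight q (fibre_mass pd k v)"]
      has_sum_entropy[of k] q_gt_1
    by (simp add: fibre_mass_nonneg fibre_mass_le_1 tsallis_weight_nonneg infsumI)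
  finally show ?thesis
    by (simp add: k_def)
qed

lemma entropy_mono:
  assumes "\<And>D D'. k' D = k' D' \<Longrightarrow> k D = k D'"
  shows "entropy k \<le> entropy k'"
proof (rule has_sum_mono[OF has_sum_entropy[of k] has_sum_entropy[of k']])
  fix D
  have "fibre_mass pd k' (k' D) \<le> fibre_mass pd k (k D)"
    using assms by (intro fibre_mass_mono) blast
  then have "tsallis_weight q (fibre_mass pd k (k D)) \<le> tsallis_weight q (fibre_mass pd k' (k' D))"
    by (rule tsallis_weight_antimono[OF q_gt_1 fibre_mass_nonneg])
  then show "pd D * tsallis_weight q (fibre_mass pd k (k D))
      \<le> pd D * tsallis_weight q (fibre_mass pd k' (k' D))"
    by (rule mult_left_mono[OF _ nonneg])
qed

lemma entropy_pair_le: "entropy (\<lambda>D. (k1 D, k2 D)) \<le> entropy k1 + entropy k2"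
proof -
  define a where "a = (\<lambda>D. fibre_mass pd k1 (k1 D))"
  define b where "b = (\<lambda>D. fibre_mass pd k2 (k2 D))"
  define r where "r = (\<lambda>D. fibre_mass pd (\<lambda>D. (k1 D, k2 D)) (k1 D, k2 D))"
  define w where "w = tsallis_weight q"
  define E where "E = (\<Sum>\<^sub>\<infinity>D. pd D * b D powr (q - 1))"
  define C where "C = (\<Sum>\<^sub>\<infinity>D. pd D * (a D * b D powr q / r D))"
  have "C \<le> E" and "((\<lambda>D. pd D * (a D * b D powr q / r D)) has_sum C) UNIV"
    using cross_moment_le[of q k1 k2] q_gt_1 by (auto simp: C_def E_def a_def b_def r_def)
  moreover have "((\<lambda>D. pd D * b D powr (q - 1)) has_sum E) UNIV"
    using summable_on_fibre_mass_powr[of "q - 1" k2] q_gt_1 by (simp add: E_def b_def)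
  ultimately have lhs: "((\<lambda>D. pd D * (b D powr (q - 1) - a D * b D powr q / r D)) has_sum E - C) UNIV"
    by (simp add: right_diff_distrib has_sum_diff)
  have rhs: "((\<lambda>D. pd D * (w (a D) + w (b D) - w (r D))) has_sum
      entropy k1 + entropy k2 - entropy (\<lambda>D. (k1 D, k2 D))) UNIV"
    unfolding distrib_left right_diff_distrib a_def b_def r_def w_def
    by (intro has_sum_diff has_sum_add has_sum_entropy)
  have "E - C \<le> entropy k1 + entropy k2 - entropy (\<lambda>D. (k1 D, k2 D))"
  proof (rule has_sum_mono[OF lhs rhs])
    fix D
    show "pd D * (b D powr (q - 1) - a D * b D powr q / r D) \<le> pd D * (w (a D) + w (b D) - w (r D))"
    proof (cases "pd D = 0")
      case False
      then have "0 < r D"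
        using le_fibre_mass[of D "\<lambda>D. (k1 D, k2 D)"] nonneg[of D] by (simp add: r_def)
      moreover have "r D \<le> a D" "r D \<le> b D"
        by (auto simp: a_def b_def r_def intro!: fibre_mass_mono)
      moreover have "a D \<le> 1"
        by (simp add: a_def fibre_mass_le_1)
      ultimately have "b D powr (q - 1) - a D * b D powr q / r D \<le> w (a D) + w (b D) - w (r D)"
        unfolding w_def using q_gt_1 by (intro tsallis_weight_cross_bound) simp_all
      then show ?thesis
        by (rule mult_left_mono[OF _ nonneg])
    qed simp
  qed
  with \<open>C \<le> E\<close> show ?thesis
    by simp
qed

end

theorem lemma18:
  fixes pd :: "'i::countable \<Rightarrow> real" and q :: real and L :: "('i \<Rightarrow> 'o) set"
  assumes "\<And>D. pd D \<ge> 0"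
    and "(pd has_sum 1) UNIV"
    and "q > 1"
  shows "arbitrage_free L (tsallis_price pd q)"
proof -
  interpret tsallis pd q
    by unfold_locales (fact assms)+
  show ?thesis
    unfolding arbitrage_free_def tsallis_price_eq_entropy
  proof (intro conjI ballI impI)
    fix Q1 Q2 :: "('i \<Rightarrow> 'o) list"
    assume "\<forall>D' D''. eval_bundle Q2 D' = eval_bundle Q2 D'' \<longrightarrow> eval_bundle Q1 D' = eval_bundle Q1 D''"
    then show "entropy (eval_bundle Q1) \<le> entropy (eval_bundle Q2)"
      by (intro entropy_mono) blast
  next
    fix Q1 Q2 :: "('i \<Rightarrow> 'o) list"
    have "entropy (eval_bundle (Q1 @ Q2)) = entropy (\<lambda>D. (eval_bundle Q1 D, eval_bundle Q2 D))"
      by (intro order.antisym entropy_mono) (simp_all add: eval_bundle_append_eq_iff)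
    then show "entropy (eval_bundle (Q1 @ Q2)) \<le> entropy (eval_bundle Q1) + entropy (eval_bundle Q2)"
      using entropy_pair_le by simp
  qed
qed

end
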